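(* Let $G$ be a graph, let $L$ be a set of specified leaks on $V(G)$, and let $\ell=I(L)$. Then every specified $\ell$-leaky forcing set of $G$ is an $L$-leaky forcing set of $G$. Consequently $\operatorname{Z}_{(L)}(G)\le \operatorname{Z}^s_{(\ell)}(G)$.
   Context: All graphs are finite, simple and undirected. Zero forcing: a blue vertex $u$ with exactly one white neighbor $w$ may force $w$ (color it blue), written $u\to w$. A specified leak on $V(G)$ is an ordered pair $x\to y$ of vertices, meaning $x$ (the tail) is prohibited from forcing $y$ (the head); a set of specified leaks is thus the arc set of a directed graph on $V(G)$. For a set $L$ of specified leaks, $T(L)$ and $H(L)$ denote its sets of tails and heads. $B$ is a specified $\ell$-leaky forcing set if for every set of at most $\ell$ specified leaks, exhaustively applying the forcing rule from initial blue set $B$ without performing prohibited forces colors all of $V(G)$ blue; $\operatorname{Z}^s_{(\ell)}(G)$ is the minimum size of such a set. Two sets $L_1,L_2$ of specified leaks on $V(G)$ are isomorphic if there is a bijection $\phi:V(G)\to V(G)$ with $x\to y\in L_1$ iff $\phi(x)\to\phi(y)\in L_2$. $B$ is an $L$-leaky forcing set if $B$ colors all of $G$ blue (never performing prohibited forces) despite any set $L_1$ of specified leaks isomorphic to some subset $L_2\subseteq L$; $\operatorname{Z}_{(L)}(G)$ is the minimum size of such a set. A set $L$ of specified leaks is independent if $|T(L)|=|L|$ and $T(L)\cap H(L)=\varnothing$. $I(L)$ is the maximum size of an independent subset of $L$. *)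

theory Defs
  imports Main
begin

definition simple_graph :: "'a set \<Rightarrow> ('a \<Rightarrow> 'a \<Rightarrow> bool) \<Rightarrow> bool" where
  "simple_graph V E \<longleftrightarrow> finite V \<and> (\<forall>u v. E u v \<longrightarrow> E v u)
     \<and> (\<forall>u. \<not> E u u) \<and> (\<forall>u v. E u v \<longrightarrow> u \<in> V \<and> v \<in> V)"

text \<open>Final blue set obtained by exhaustively applying the zero forcing rule from B,
  never performing a prohibited force (u,w) \<in> L (u is prohibited from forcing w).\<close>
inductive_set leaky_closure :: "'a set \<Rightarrow> ('a \<Rightarrow> 'a \<Rightarrow> bool) \<Rightarrow> ('a \<times> 'a) set \<Rightarrow> 'a set \<Rightarrow> 'a set"
  for V E L B where
  init: "b \<in> B \<Longrightarrow> b \<in> leaky_closure V E L B"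
| force: "\<lbrakk> u \<in> leaky_closure V E L B; E u w; (u, w) \<notin> L;
            \<forall>x. E u x \<and> x \<noteq> w \<longrightarrow> x \<in> leaky_closure V E L B \<rbrakk>
          \<Longrightarrow> w \<in> leaky_closure V E L B"

definition spec_leaky_forcing_set :: "'a set \<Rightarrow> ('a \<Rightarrow> 'a \<Rightarrow> bool) \<Rightarrow> nat \<Rightarrow> 'a set \<Rightarrow> bool" where
  "spec_leaky_forcing_set V E l B \<longleftrightarrow> B \<subseteq> V \<and>
     (\<forall>L. L \<subseteq> V \<times> V \<and> card L \<le> l \<longrightarrow> leaky_closure V E L B = V)"

definition spec_leaky_forcing_number :: "'a set \<Rightarrow> ('a \<Rightarrow> 'a \<Rightarrow> bool) \<Rightarrow> nat \<Rightarrow> nat" where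
  "spec_leaky_forcing_number V E l = (LEAST k. \<exists>B. spec_leaky_forcing_set V E l B \<and> card B = k)"

definition leaks_isomorphic :: "'a set \<Rightarrow> ('a \<times> 'a) set \<Rightarrow> ('a \<times> 'a) set \<Rightarrow> bool" where
  "leaks_isomorphic V L1 L2 \<longleftrightarrow> (\<exists>\<phi>. bij_betw \<phi> V V \<and>
     (\<forall>x\<in>V. \<forall>y\<in>V. (x, y) \<in> L1 \<longleftrightarrow> (\<phi> x, \<phi> y) \<in> L2))"

definition L_leaky_forcing_set :: "'a set \<Rightarrow> ('a \<Rightarrow> 'a \<Rightarrow> bool) \<Rightarrow> ('a \<times> 'a) set \<Rightarrow> 'a set \<Rightarrow> bool" where
  "L_leaky_forcing_set V E L B \<longleftrightarrow> B \<subseteq> V \<and>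
     (\<forall>L1 L2. L1 \<subseteq> V \<times> V \<and> L2 \<subseteq> L \<and> leaks_isomorphic V L1 L2
        \<longrightarrow> leaky_closure V E L1 B = V)"

definition L_leaky_forcing_number :: "'a set \<Rightarrow> ('a \<Rightarrow> 'a \<Rightarrow> bool) \<Rightarrow> ('a \<times> 'a) set \<Rightarrow> nat" where
  "L_leaky_forcing_number V E L = (LEAST k. \<exists>B. L_leaky_forcing_set V E L B \<and> card B = k)"

definition tails :: "('a \<times> 'a) set \<Rightarrow> 'a set" where "tails L = fst ` L"
definition heads :: "('a \<times> 'a) set \<Rightarrow> 'a set" where "heads L = snd ` L"

definition independent_leaks :: "('a \<times> 'a) set \<Rightarrow> bool" where
  "independent_leaks L \<longleftrightarrow> card (tails L) = card L \<and> tails L \<inter> heads L = {}"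

definition indep_number :: "('a \<times> 'a) set \<Rightarrow> nat" where
  "indep_number L = Max {card S | S. S \<subseteq> L \<and> independent_leaks S}"

end

theory Submission
  imports Defs
begin

text \<open>If the leaky forcing process from B with leaks L1 stops at the blue set C, then the
  forces it is stuck on -- a blue vertex u whose only white neighbour is w -- are all
  leaks of L1. Such stuck forces form an independent set of leaks: a tail determines its
  head, tails are blue and heads are white. Transported along the isomorphism into L, there
  are at most I(L) of them, and with only these leaks the process from B also stops
  inside C. Hence a specified I(L)-leaky forcing set forces C = V.\<close>

lemma leaky_closure_subset:
  assumes "simple_graph V E" "B \<subseteq> V"
  shows "leaky_closure V E L B \<subseteq> V"
proof
  fix x assume "x \<in> leaky_closure V E L B"
  then show "x \<in> V"
    by induction (use assms in \<open>auto simp: simple_graph_def\<close>)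
qed

lemma leaky_closure_minimal:
  assumes "B \<subseteq> C"
    and "\<And>u w. u \<in> C \<Longrightarrow> E u w \<Longrightarrow> (u, w) \<notin> L \<Longrightarrow> (\<forall>x. E u x \<and> x \<noteq> w \<longrightarrow> x \<in> C) \<Longrightarrow> w \<in> C"
  shows "leaky_closure V E L B \<subseteq> C"
proof
  fix x assume "x \<in> leaky_closure V E L B"
  then show "x \<in> C"
    by induction (use assms in blast)+
qed

definition stalled_forces :: "('a \<Rightarrow> 'a \<Rightarrow> bool) \<Rightarrow> 'a set \<Rightarrow> ('a \<times> 'a) set" where
  "stalled_forces E C = {(u, w). u \<in> C \<and> E u w \<and> w \<notin> C \<and> (\<forall>x. E u x \<and> x \<noteq> w \<longrightarrow> x \<in> C)}"

lemma stalled_forces_subset_leaks: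
  "stalled_forces E (leaky_closure V E L B) \<subseteq> L"
  unfolding stalled_forces_def by (auto intro: leaky_closure.force)

lemma stalled_forces_subset_edges:
  assumes "simple_graph V E"
  shows "stalled_forces E C \<subseteq> V \<times> V"
  using assms unfolding stalled_forces_def simple_graph_def by auto

lemma leaky_closure_stalled_forces:
  "leaky_closure V E (stalled_forces E (leaky_closure V E L B)) B \<subseteq> leaky_closure V E L B"
  by (rule leaky_closure_minimal) (auto simp: stalled_forces_def intro: leaky_closure.init)

lemma independent_stalled_forces: "independent_leaks (stalled_forces E C)"
proof -
  have "inj_on fst (stalled_forces E C)"
    by (rule inj_onI) (auto simp: stalled_forces_def)
  moreover have "tails (stalled_forces E C) \<inter> heads (stalled_forces E C) = {}"
    by (auto simp: tails_def heads_def stalled_forces_def)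
  ultimately show ?thesis
    by (simp add: independent_leaks_def tails_def card_image)
qed

lemma independent_leaks_image:
  assumes "independent_leaks S" and "S \<subseteq> A \<times> A" and "inj_on f A"
  shows "independent_leaks (map_prod f f ` S)"
proof -
  have inj_S: "inj_on (map_prod f f) S"
    using map_prod_inj_on[OF assms(3,3)] assms(2) by (rule inj_on_subset)
  have "tails S \<subseteq> A"
    using assms(2) by (auto simp: tails_def)
  then have inj_tails: "inj_on f (tails S)"
    using assms(3) inj_on_subset by blast
  have "tails (map_prod f f ` S) = f ` tails S" "heads (map_prod f f ` S) = f ` heads S"
    by (force simp: tails_def heads_def)+
  moreover have "f ` tails S \<inter> f ` heads S = {}"
  proof -
    have "tails S \<union> heads S \<subseteq> A"
      using assms(2) by (auto simp: tails_def heads_def)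
    then show ?thesis
      using assms(1,3) inj_on_image_Int[of f A "tails S" "heads S"]
      by (auto simp: independent_leaks_def)
  qed
  ultimately show ?thesis
    using assms(1) card_image[OF inj_S] card_image[OF inj_tails]
    by (simp add: independent_leaks_def)
qed

lemma card_le_indep_number:
  assumes "finite L" "S \<subseteq> L" "independent_leaks S"
  shows "card S \<le> indep_number L"
  unfolding indep_number_def
proof (rule Max_ge)
  have "{card S |S. S \<subseteq> L \<and> independent_leaks S} \<subseteq> card ` Pow L" by auto
  then show "finite {card S |S. S \<subseteq> L \<and> independent_leaks S}"
    using assms(1) finite_subset by blast
qed (use assms in blast)

lemma spec_leaky_forcing_set_imp_L_leaky_forcing_set:
  assumes G: "simple_graph V E" and "L \<subseteq> V \<times> V"
    and S: "spec_leaky_forcing_set V E (indep_number L) B"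
  shows "L_leaky_forcing_set V E L B"
  unfolding L_leaky_forcing_set_def
proof (intro conjI allI impI)
  show BV: "B \<subseteq> V" using S by (simp add: spec_leaky_forcing_set_def)
  fix L1 L2 assume "L1 \<subseteq> V \<times> V \<and> L2 \<subseteq> L \<and> leaks_isomorphic V L1 L2"
  then obtain \<phi> where \<phi>: "bij_betw \<phi> V V" "\<forall>x\<in>V. \<forall>y\<in>V. (x, y) \<in> L1 \<longleftrightarrow> (\<phi> x, \<phi> y) \<in> L2"
    and "L2 \<subseteq> L"
    unfolding leaks_isomorphic_def by blast
  define C where "C = leaky_closure V E L1 B"
  define K where "K = stalled_forces E C"
  have finite_L: "finite L"
    using G \<open>L \<subseteq> V \<times> V\<close> by (auto simp: simple_graph_def intro: finite_subset)
  have K_V: "K \<subseteq> V \<times> V" and K_L1: "K \<subseteq> L1"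
    unfolding K_def C_def using stalled_forces_subset_edges[OF G] stalled_forces_subset_leaks
    by blast+
  have inj: "inj_on \<phi> V" using \<phi>(1) by (simp add: bij_betw_def)
  have "map_prod \<phi> \<phi> ` K \<subseteq> L"
    using K_V K_L1 \<phi>(2) \<open>L2 \<subseteq> L\<close> by fastforce
  moreover have "independent_leaks (map_prod \<phi> \<phi> ` K)"
    using independent_leaks_image[OF _ K_V inj] independent_stalled_forces
    unfolding K_def by blast
  moreover have "card (map_prod \<phi> \<phi> ` K) = card K"
    using map_prod_inj_on[OF inj inj] K_V by (intro card_image) (rule inj_on_subset)
  ultimately have "card K \<le> indep_number L"
    using card_le_indep_number[OF finite_L] by metis
  then have "leaky_closure V E K B = V"
    using S K_V by (simp add: spec_leaky_forcing_set_def)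
  then have "V \<subseteq> C"
    using leaky_closure_stalled_forces unfolding K_def C_def by metis
  then show "leaky_closure V E L1 B = V"
    using leaky_closure_subset[OF G BV] unfolding C_def by blast
qed

lemma spec_leaky_forcing_set_vertices:
  assumes "simple_graph V E"
  shows "spec_leaky_forcing_set V E l V"
  using leaky_closure_subset[OF assms, of V] leaky_closure.init[of _ V V E]
  by (auto simp: spec_leaky_forcing_set_def)

lemma Least_card_mono:
  assumes "\<And>B. P B \<Longrightarrow> Q B" and "P B0"
  shows "(LEAST k. \<exists>B. Q B \<and> card B = k) \<le> (LEAST k. \<exists>B. P B \<and> card B = k)"
proof -
  obtain B where "P B" "card B = (LEAST k. \<exists>B. P B \<and> card B = k)"
    using LeastI_ex[of "\<lambda>k. \<exists>B. P B \<and> card B = k"] assms(2) by blast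
  then show ?thesis
    using assms(1) by (metis (mono_tags, lifting) Least_le)
qed

theorem theorem5p1:
  fixes V :: "'a set" and E :: "'a \<Rightarrow> 'a \<Rightarrow> bool" and L :: "('a \<times> 'a) set" and l :: nat
  assumes "simple_graph V E"
    and "L \<subseteq> V \<times> V"
    and "l = indep_number L"
  shows "(\<forall>B. spec_leaky_forcing_set V E l B \<longrightarrow> L_leaky_forcing_set V E L B)
         \<and> L_leaky_forcing_number V E L \<le> spec_leaky_forcing_number V E l"
  using spec_leaky_forcing_set_imp_L_leaky_forcing_set[OF assms(1,2)]
    Least_card_mono[of "spec_leaky_forcing_set V E l" "L_leaky_forcing_set V E L"]
    spec_leaky_forcing_set_vertices[OF assms(1)] assms(3)
  unfolding L_leaky_forcing_number_def spec_leaky_forcing_number_def by blast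

end
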